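(* Let $D\ge1$, $V\in\mathbb{R}^{d_y\times d_x}$, and $\Sigma\in\mathbb{R}^{d_x\times d_x}$ positive definite. Let $V\Sigma^{1/2}=\hat L\hat S\hat R$ be a compact singular value decomposition with $\hat S\in\mathbb{R}^{r\times r}$ diagonal positive, $r=\mathrm{rank}(V\Sigma^{1/2})$. Consider matrices $W_k\in\mathbb{R}^{d_k\times d_{k-1}}$, $k=1,\dots,D$, with $d_0=d_x$, $d_D=d_y$ and $d_k\ge r$ for all $k$, and define, with $A_k:=W_D\cdots W_{k+1}$ ($A_D=I_{d_y}$) and $B_k:=W_{k-1}\cdots W_1$ ($B_1=I_{d_x}$), $$T(W_1,\dots,W_D)=\sum_{k=1}^D\mathrm{Tr}[A_k^TA_k]\,\mathrm{Tr}[B_k\Sigma B_k^T]$$ (equivalently $d_y\mathrm{Tr}[W_{D-1}\cdots W_1\Sigma W_1^T\cdots W_{D-1}^T]+\mathrm{Tr}[W_D^TW_D]\mathrm{Tr}[W_{D-2}\cdots W_1\Sigma W_1^T\cdots W_{D-2}^T]+\dots+\mathrm{Tr}[W_2^T\cdots W_D^TW_D\cdots W_2]\mathrm{Tr}[\Sigma]$). Then, under the constraint $W_D\cdots W_1=V$, $$\min T(W_1,\dots,W_D)=D(\mathrm{Tr}\hat S)^{2(D-1)/D}(d_y\mathrm{Tr}\Sigma)^{1/D},$$ and the minimum is achieved by $$W_D=(\mathrm{Tr}\hat S)^{-\frac{D-2}{2D}}d_y^{\frac{D-1}{2D}}(\mathrm{Tr}\Sigma)^{-\frac1{2D}}\hat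 L\hat S^{1/2}U_{D-1}^T,\quad W_k=(\mathrm{Tr}\hat S)^{\frac1D}(d_y\mathrm{Tr}\Sigma)^{-\frac1{2D}}U_kU_{k-1}^T\ (2\le k\le D-1),$$ $$W_1\Sigma^{1/2}=(\mathrm{Tr}\hat S)^{-\frac{D-2}{2D}}d_y^{-\frac1{2D}}(\mathrm{Tr}\Sigma)^{\frac{D-1}{2D}}U_1\hat S^{1/2}\hat R,$$ for arbitrary $U_i\in\mathbb{R}^{d_i\times r}$ with $U_i^TU_i=I_r$, $i=1,\dots,D-1$.
   Context: $\mathrm{Tr}\hat S$ is the nuclear norm of $V\Sigma^{1/2}$. *)

theory Defs
  imports "Jordan_Normal_Form.DL_Rank"
begin

definition mtrace :: "real mat \<Rightarrow> real" where
  "mtrace M = (\<Sum>i<dim_row M. M $$ (i, i))"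

definition pos_def_mat :: "nat \<Rightarrow> real mat \<Rightarrow> bool" where
  "pos_def_mat n M \<longleftrightarrow> M \<in> carrier_mat n n \<and> M\<^sup>T = M \<and>
     (\<forall>x \<in> carrier_vec n. x \<noteq> 0\<^sub>v n \<longrightarrow> x \<bullet> (M *\<^sub>v x) > 0)"

primrec chain :: "(nat \<Rightarrow> real mat) \<Rightarrow> (nat \<Rightarrow> nat) \<Rightarrow> nat \<Rightarrow> nat \<Rightarrow> real mat" where
  "chain W d a 0 = 1\<^sub>m (d a)"
| "chain W d a (Suc n) = W (a + Suc n) * chain W d a n"

text \<open>A_k = W_D ... W_(k+1) and B_k = W_(k-1) ... W_1.\<close>
definition Amat :: "nat \<Rightarrow> (nat \<Rightarrow> real mat) \<Rightarrow> (nat \<Rightarrow> nat) \<Rightarrow> nat \<Rightarrow> real mat" where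
  "Amat D W d k = chain W d k (D - k)"

definition Bmat :: "(nat \<Rightarrow> real mat) \<Rightarrow> (nat \<Rightarrow> nat) \<Rightarrow> nat \<Rightarrow> real mat" where
  "Bmat W d k = chain W d 0 (k - 1)"

definition Tobj :: "nat \<Rightarrow> real mat \<Rightarrow> (nat \<Rightarrow> real mat) \<Rightarrow> (nat \<Rightarrow> nat) \<Rightarrow> real" where
  "Tobj D Sig W d = (\<Sum>k=1..D. mtrace ((Amat D W d k)\<^sup>T * Amat D W d k)
                                  * mtrace (Bmat W d k * Sig * (Bmat W d k)\<^sup>T))"

definition feasible :: "nat \<Rightarrow> nat \<Rightarrow> nat \<Rightarrow> nat \<Rightarrow> real mat \<Rightarrow> (nat \<Rightarrow> real mat) \<Rightarrow> (nat \<Rightarrow> nat) \<Rightarrow> bool" where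
  "feasible D dx dy r V W d \<longleftrightarrow> d 0 = dx \<and> d D = dy \<and> (\<forall>k\<le>D. r \<le> d k) \<and>
     (\<forall>k\<in>{1..D}. W k \<in> carrier_mat (d k) (d (k - 1))) \<and> chain W d 0 D = V"

definition diag_sqrt :: "real mat \<Rightarrow> real mat" where
  "diag_sqrt S = mat (dim_row S) (dim_col S) (\<lambda>(i,j). if i = j then sqrt (S $$ (i,i)) else 0)"

text \<open>Real power with the usual convention 0^0 = 1 (Isabelle's powr has 0 powr 0 = 0).\<close>
definition rpow :: "real \<Rightarrow> real \<Rightarrow> real" where
  "rpow x a = (if a = 0 then 1 else x powr a)"

end

(*
  Write a_k = |A_k|^2 and b_k = |B_k Sh|^2 for squared Frobenius norms, where Sh is the
  symmetric square root of Sig; then T = sum_k a_k b_k, with a_D = d_y and b_1 = Tr Sig.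
  Since A_k B_(k+1) Sh = V Sh = L S R, the Cauchy-Schwarz inequality for the trace inner
  product gives (Tr S)^2 <= a_k b_(k+1). Multiplying over k, the product of the D terms
  a_k b_k is at least d_y Tr Sig (Tr S)^(2(D-1)), and AM-GM yields the lower bound.
  For the balanced factorizations, A_k and B_k Sh are scalar multiples of L S^(1/2) U_k^T
  and U_(k-1) S^(1/2) R, so all D terms a_k b_k coincide and AM-GM is tight; taking for
  U_k the first r coordinate vectors (possible as d_k >= r) shows that they exist.
*)
theory Submission
  imports Defs "HOL-Analysis.Convex"
begin

section \<open>Squared Frobenius norm\<close>

definition frob_norm_sq :: "real mat \<Rightarrow> real" where
  "frob_norm_sq M = (\<Sum>i<dim_row M. \<Sum>j<dim_col M. (M $$ (i,j))\<^sup>2)"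

lemma frob_norm_sq_nonneg: "frob_norm_sq M \<ge> 0"
  unfolding frob_norm_sq_def by (intro sum_nonneg) auto

lemma frob_norm_sq_transpose: "frob_norm_sq M\<^sup>T = frob_norm_sq M"
  unfolding frob_norm_sq_def by (simp add: sum.swap[of _ "{..<dim_col M}"])

lemma frob_norm_sq_smult: "frob_norm_sq (c \<cdot>\<^sub>m M) = c\<^sup>2 * frob_norm_sq M"
  unfolding frob_norm_sq_def by (simp add: sum_distrib_left power_mult_distrib)

lemma frob_norm_sq_one_mat: "frob_norm_sq (1\<^sub>m n) = real n"
  unfolding frob_norm_sq_def by (simp add: if_distrib[of "\<lambda>x. x\<^sup>2"] cong: if_cong)

lemma mtrace_mult:
  assumes "A \<in> carrier_mat n m" "B \<in> carrier_mat m n"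
  shows "mtrace (A * B) = (\<Sum>i<n. \<Sum>j<m. A $$ (i,j) * B $$ (j,i))"
  using assms unfolding mtrace_def by (auto simp: scalar_prod_def atLeast0LessThan intro!: sum.cong)

lemma mtrace_transpose_mult_self:
  assumes "M \<in> carrier_mat n m"
  shows "mtrace (M\<^sup>T * M) = frob_norm_sq M"
  using assms
  by (simp add: mtrace_mult[of "M\<^sup>T" m n M] frob_norm_sq_def power2_eq_square sum.swap[of _ "{..<m}"])

lemma mtrace_mult_transpose_self:
  assumes "M \<in> carrier_mat n m"
  shows "mtrace (M * M\<^sup>T) = frob_norm_sq M"
  using assms by (simp add: mtrace_mult[of M n m "M\<^sup>T"] frob_norm_sq_def power2_eq_square)

lemma mtrace_symmetric_square:
  assumes "Sh \<in> carrier_mat n n" "Sh\<^sup>T = Sh" "Sh * Sh = Sig"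
  shows "mtrace Sig = frob_norm_sq Sh"
  using assms mtrace_mult_transpose_self[of Sh n n] by simp

lemma mtrace_mult_sq_le:
  assumes X: "X \<in> carrier_mat n m" and Y: "Y \<in> carrier_mat m n"
  shows "(mtrace (X * Y))\<^sup>2 \<le> frob_norm_sq X * frob_norm_sq Y"
proof -
  let ?I = "{..<n} \<times> {..<m}"
  have "mtrace (X * Y) = (\<Sum>(i,j)\<in>?I. X $$ (i,j) * Y $$ (j,i))"
    by (simp add: mtrace_mult[OF X Y] sum.cartesian_product)
  moreover have "frob_norm_sq X = (\<Sum>(i,j)\<in>?I. (X $$ (i,j))\<^sup>2)"
    using X by (simp add: frob_norm_sq_def sum.cartesian_product)
  moreover have "frob_norm_sq Y = (\<Sum>(i,j)\<in>?I. (Y $$ (j,i))\<^sup>2)"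
  proof -
    have "frob_norm_sq Y = (\<Sum>i<n. \<Sum>j<m. (Y $$ (j,i))\<^sup>2)"
      using Y by (simp add: frob_norm_sq_def sum.swap[of _ "{..<m}"])
    then show ?thesis by (simp add: sum.cartesian_product)
  qed
  ultimately show ?thesis
    using Cauchy_Schwarz_ineq_sum[of "\<lambda>(i,j). X $$ (i,j)" "\<lambda>(i,j). Y $$ (j,i)" ?I]
    by (simp add: case_prod_beta)
qed

lemma frob_norm_sq_isometry_mult:
  assumes Q: "Q \<in> carrier_mat n r" and QQ: "Q\<^sup>T * Q = 1\<^sub>m r" and M: "M \<in> carrier_mat r m"
  shows "frob_norm_sq (Q * M) = frob_norm_sq M"
proof -
  have "(Q * M)\<^sup>T * (Q * M) = M\<^sup>T * ((Q\<^sup>T * Q) * M)"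
    using Q M by (simp add: transpose_mult[OF Q M] assoc_mult_mat[of _ m r _ n _ m] assoc_mult_mat[of _ r n _ r])
  then show ?thesis
    using Q M QQ by (simp add: mtrace_transpose_mult_self[symmetric, of _ n m] mtrace_transpose_mult_self[OF M])
qed

lemma frob_norm_sq_mult_coisometry:
  assumes Q: "Q \<in> carrier_mat r n" and QQ: "Q * Q\<^sup>T = 1\<^sub>m r" and M: "M \<in> carrier_mat m r"
  shows "frob_norm_sq (M * Q) = frob_norm_sq M"
proof -
  have "frob_norm_sq (M * Q) = frob_norm_sq (Q\<^sup>T * M\<^sup>T)"
    using Q M by (simp add: transpose_mult[OF M Q, symmetric] frob_norm_sq_transpose)
  also have "\<dots> = frob_norm_sq M"
    using Q M QQ by (simp add: frob_norm_sq_isometry_mult[of _ n r] frob_norm_sq_transpose)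
  finally show ?thesis .
qed

text \<open>Cauchy-Schwarz applied to \<open>\<langle>M, Q Q\<^sup>T M\<rangle>\<close>, whose value is \<open>\<parallel>Q\<^sup>T M\<parallel>\<^sup>2\<close>.\<close>
lemma frob_norm_sq_transpose_isometry_mult_le:
  assumes Q: "Q \<in> carrier_mat n r" and QQ: "Q\<^sup>T * Q = 1\<^sub>m r" and M: "M \<in> carrier_mat n m"
  shows "frob_norm_sq (Q\<^sup>T * M) \<le> frob_norm_sq M"
proof -
  define f where "f = frob_norm_sq (Q\<^sup>T * M)"
  have "(Q\<^sup>T * M)\<^sup>T * (Q\<^sup>T * M) = M\<^sup>T * (Q * (Q\<^sup>T * M))"
    using Q M by (simp add: transpose_mult[of _ r n M m] assoc_mult_mat[of _ m n _ r _ m])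
  then have "f = mtrace (M\<^sup>T * (Q * (Q\<^sup>T * M)))"
    using Q M by (simp add: f_def mtrace_transpose_mult_self[symmetric, of _ r m])
  then have "f\<^sup>2 \<le> frob_norm_sq M\<^sup>T * frob_norm_sq (Q * (Q\<^sup>T * M))"
    using Q M by (simp add: mtrace_mult_sq_le[of _ m n])
  also have "\<dots> = frob_norm_sq M * f"
    using frob_norm_sq_isometry_mult[OF Q QQ, of "Q\<^sup>T * M" m] Q M
    by (simp add: f_def frob_norm_sq_transpose)
  finally have "f * f \<le> frob_norm_sq M * f" by (simp add: power2_eq_square)
  then show ?thesis
    using frob_norm_sq_nonneg[of "Q\<^sup>T * M"] unfolding f_def[symmetric]
    by (cases "f = 0") (auto simp: frob_norm_sq_nonneg intro: mult_right_le_imp_le)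
qed

lemma mtrace_sq_le_of_factorization:
  assumes A: "A \<in> carrier_mat p m" and B: "B \<in> carrier_mat m q"
    and L: "L \<in> carrier_mat p r" and LL: "L\<^sup>T * L = 1\<^sub>m r"
    and R: "R \<in> carrier_mat r q" and RR: "R * R\<^sup>T = 1\<^sub>m r"
    and S: "S \<in> carrier_mat r r" and AB: "A * B = L * S * R"
  shows "(mtrace S)\<^sup>2 \<le> frob_norm_sq A * frob_norm_sq B"
proof -
  have LT: "L\<^sup>T \<in> carrier_mat r p" and RT: "R\<^sup>T \<in> carrier_mat q r" using L R by auto
  have "L\<^sup>T * (L * S * R) * R\<^sup>T = ((L\<^sup>T * L) * (S * R)) * R\<^sup>T"
    using L S R by (simp add: assoc_mult_mat[OF L S R] assoc_mult_mat[OF LT L, of "S * R" q])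
  also have "\<dots> = S * (R * R\<^sup>T)" using S R LL by (simp add: assoc_mult_mat[OF S R RT])
  also have "\<dots> = S" using S RR by simp
  finally have "S = L\<^sup>T * (A * B) * R\<^sup>T" using AB by simp
  also have "\<dots> = (L\<^sup>T * A) * B * R\<^sup>T" by (simp add: assoc_mult_mat[OF LT A B])
  also have "\<dots> = (L\<^sup>T * A) * (B * R\<^sup>T)" using LT A by (intro assoc_mult_mat[OF _ B RT]) auto
  finally have "S = (L\<^sup>T * A) * (B * R\<^sup>T)" .
  then have "(mtrace S)\<^sup>2 \<le> frob_norm_sq (L\<^sup>T * A) * frob_norm_sq (B * R\<^sup>T)"
    using L A B R by (simp add: mtrace_mult_sq_le[of _ r m])
  also have "\<dots> \<le> frob_norm_sq A * frob_norm_sq B"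
  proof (rule mult_mono)
    have "frob_norm_sq (B * R\<^sup>T) = frob_norm_sq ((R\<^sup>T)\<^sup>T * B\<^sup>T)"
      using B R by (simp add: transpose_mult[of B m q] frob_norm_sq_transpose[symmetric, of "B * R\<^sup>T"])
    also have "\<dots> \<le> frob_norm_sq B"
      using frob_norm_sq_transpose_isometry_mult_le[of "R\<^sup>T" q r "B\<^sup>T" m] R B RR
      by (simp add: frob_norm_sq_transpose)
    finally show "frob_norm_sq (B * R\<^sup>T) \<le> frob_norm_sq B" .
  qed (use frob_norm_sq_transpose_isometry_mult_le[OF L LL A] in \<open>auto simp: frob_norm_sq_nonneg\<close>)
  finally show ?thesis .
qed

section \<open>Partial products of the factors\<close>

lemma chain_carrier:
  assumes "\<forall>k\<in>{a+1..a+n}. W k \<in> carrier_mat (d k) (d (k-1))"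
  shows "chain W d a n \<in> carrier_mat (d (a+n)) (d a)"
  using assms
proof (induction n)
  case (Suc n)
  then have "W (a + Suc n) \<in> carrier_mat (d (a + Suc n)) (d (a+n))"
    by (auto dest: bspec[of _ _ "a + Suc n"])
  with Suc show ?case by auto
qed simp

lemma chain_mult:
  assumes "\<forall>k\<in>{a+1..a+m+n}. W k \<in> carrier_mat (d k) (d (k-1))"
  shows "chain W d (a+m) n * chain W d a m = chain W d a (m+n)"
  using assms
proof (induction n)
  case 0
  then have "chain W d a m \<in> carrier_mat (d (a+m)) (d a)" by (intro chain_carrier) auto
  then show ?case by simp
next
  case (Suc n)
  have W: "W (a + m + Suc n) \<in> carrier_mat (d (a + m + Suc n)) (d (a+m+n))"
    using Suc.prems by (auto dest: bspec[of _ _ "a + m + Suc n"])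
  have "chain W d (a+m) n \<in> carrier_mat (d (a+m+n)) (d (a+m))"
    and "chain W d a m \<in> carrier_mat (d (a+m)) (d a)"
    using Suc.prems by (intro chain_carrier; auto)+
  with W Suc show ?case by (simp add: assoc_mult_mat[OF W] add.assoc)
qed

lemma chain_Suc_right:
  assumes "\<forall>k\<in>{a+1..a+1+n}. W k \<in> carrier_mat (d k) (d (k-1))"
  shows "chain W d a (Suc n) = chain W d (Suc a) n * W (Suc a)"
proof -
  have "W (Suc a) \<in> carrier_mat (d (Suc a)) (d a)"
    using assms by (auto dest: bspec[of _ _ "Suc a"])
  then show ?thesis
    using chain_mult[of a 1 n W d] assms by simp
qed

lemma Amat_carrier:
  assumes "\<forall>k\<in>{1..D}. W k \<in> carrier_mat (d k) (d (k-1))" "k \<le> D"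
  shows "Amat D W d k \<in> carrier_mat (d D) (d k)"
  using assms chain_carrier[of k "D-k" W d] unfolding Amat_def by auto

lemma Bmat_carrier:
  assumes "\<forall>k\<in>{1..D}. W k \<in> carrier_mat (d k) (d (k-1))" "1 \<le> k" "k \<le> D"
  shows "Bmat W d k \<in> carrier_mat (d (k-1)) (d 0)"
proof -
  have "\<forall>j\<in>{0+1..0+(k-1)}. W j \<in> carrier_mat (d j) (d (j-1))"
    using assms by auto
  from chain_carrier[OF this] show ?thesis using assms by (simp add: Bmat_def)
qed

lemma Amat_mult_Bmat_Suc:
  assumes "\<forall>k\<in>{1..D}. W k \<in> carrier_mat (d k) (d (k-1))" "k < D"
  shows "Amat D W d k * Bmat W d (Suc k) = chain W d 0 D"
  using assms chain_mult[of 0 k "D-k" W d] unfolding Amat_def Bmat_def by auto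

lemma Tobj_eq_sum_frob_norm_sq:
  assumes W: "\<forall>k\<in>{1..D}. W k \<in> carrier_mat (d k) (d (k-1))"
    and Sh: "Sh \<in> carrier_mat (d 0) (d 0)" and ShT: "Sh\<^sup>T = Sh" and Sh_sq: "Sh * Sh = Sig"
  shows "Tobj D Sig W d = (\<Sum>k=1..D. frob_norm_sq (Amat D W d k) * frob_norm_sq (Bmat W d k * Sh))"
  unfolding Tobj_def
proof (intro sum.cong refl)
  fix k assume k: "k \<in> {1..D}"
  define B where "B = Bmat W d k"
  have A: "Amat D W d k \<in> carrier_mat (d D) (d k)" using Amat_carrier[OF W] k by auto
  have B: "B \<in> carrier_mat (d (k-1)) (d 0)" using Bmat_carrier[OF W] k by (auto simp: B_def)
  have "(B * Sh) * (B * Sh)\<^sup>T = (B * Sh) * (Sh * B\<^sup>T)" using ShT by (simp add: transpose_mult[OF B Sh])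
  also have "\<dots> = ((B * Sh) * Sh) * B\<^sup>T" using B Sh by (intro assoc_mult_mat[symmetric]) auto
  also have "\<dots> = B * Sig * B\<^sup>T" using B Sh Sh_sq by (simp add: assoc_mult_mat[OF B Sh Sh])
  finally have "mtrace (B * Sig * B\<^sup>T) = frob_norm_sq (B * Sh)"
    using mtrace_mult_transpose_self[of "B * Sh" "d (k-1)" "d 0"] B Sh by simp
  then show "mtrace ((Amat D W d k)\<^sup>T * Amat D W d k) * mtrace (Bmat W d k * Sig * (Bmat W d k)\<^sup>T)
      = frob_norm_sq (Amat D W d k) * frob_norm_sq (Bmat W d k * Sh)"
    by (simp add: B_def mtrace_transpose_mult_self[OF A])
qed

lemma Tobj_single_factor:
  assumes "Sh \<in> carrier_mat (d 0) (d 0)" "Sh\<^sup>T = Sh" "Sh * Sh = Sig"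
    and "W 1 \<in> carrier_mat (d 1) (d 0)"
  shows "Tobj 1 Sig W d = real (d 1) * mtrace Sig"
  using assms Tobj_eq_sum_frob_norm_sq[of 1 W d Sh Sig]
  by (simp add: Amat_def Bmat_def frob_norm_sq_one_mat mtrace_symmetric_square)

section \<open>The lower bound\<close>

lemma prod_pairs_shift:
  fixes a b :: "nat \<Rightarrow> 'a :: comm_monoid_mult"
  assumes "D \<ge> 1"
  shows "(\<Prod>k=1..D. a k * b k) = a D * b 1 * (\<Prod>k=1..D-1. a k * b (Suc k))"
proof -
  obtain n where n: "D = Suc n" using assms by (cases D) auto
  have "(\<Prod>k=1..D. a k) = (\<Prod>k=1..n. a k) * a D" by (simp add: n prod.cl_ivl_Suc)
  moreover have "(\<Prod>k=1..D. b k) = b 1 * (\<Prod>k=Suc 1..Suc n. b k)"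
    unfolding n by (rule prod.atLeast_Suc_atMost) simp
  moreover have "(\<Prod>k=Suc 1..Suc n. b k) = (\<Prod>k=1..n. b (Suc k))"
    by (rule prod.shift_bounds_cl_Suc_ivl)
  ultimately show ?thesis by (simp add: n prod.distrib ac_simps)
qed

lemma sum_pairs_ge_amgm:
  fixes a b :: "nat \<Rightarrow> real"
  assumes D: "D \<ge> 1" and nonneg: "\<And>k. a k \<ge> 0" "\<And>k. b k \<ge> 0" and "c \<ge> 0"
    and pair: "\<And>k. 1 \<le> k \<Longrightarrow> k < D \<Longrightarrow> c \<le> a k * b (Suc k)"
  shows "real D * (a D * b 1 * c ^ (D-1)) powr (1 / real D) \<le> (\<Sum>k=1..D. a k * b k)"
proof -
  have "c ^ (D-1) = (\<Prod>k=1..D-1. c)" by simp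
  also have "\<dots> \<le> (\<Prod>k=1..D-1. a k * b (Suc k))" using pair \<open>c \<ge> 0\<close> by (intro prod_mono) auto
  finally have "a D * b 1 * c ^ (D-1) \<le> a D * b 1 * (\<Prod>k=1..D-1. a k * b (Suc k))"
    using nonneg by (simp add: mult_left_mono)
  also have "\<dots> = (\<Prod>k=1..D. a k * b k)" by (rule prod_pairs_shift[OF D, symmetric])
  finally have "a D * b 1 * c ^ (D-1) \<le> (\<Prod>k=1..D. a k * b k)" .
  then have "(a D * b 1 * c ^ (D-1)) powr (1 / real D) \<le> (\<Prod>k=1..D. a k * b k) powr (1 / real D)"
    using nonneg \<open>c \<ge> 0\<close> by (intro powr_mono2) auto
  also have "\<dots> \<le> (\<Sum>k=1..D. a k * b k / real D)"
    using arith_geom_mean[of "{1..D}" "\<lambda>k. a k * b k"] D nonneg by simp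
  finally show ?thesis using D by (simp add: sum_divide_distrib[symmetric] field_simps)
qed

lemma powr_mult_pow_eq_rpow:
  fixes s y :: real
  assumes "D \<ge> 1" "s \<ge> 0" "y \<ge> 0"
  shows "(y * (s\<^sup>2) ^ (D-1)) powr (1 / real D) = rpow s (2 * (real D - 1) / real D) * y powr (1 / real D)"
proof (cases "D = 1")
  case False
  then have "2 * (real D - 1) / real D \<noteq> 0" using assms by auto
  moreover have "((s\<^sup>2) ^ (D-1)) powr (1 / real D) = s powr (2 * (real D - 1) / real D)"
  proof (cases "s = 0")
    case False
    then have "s > 0" using assms by simp
    then have "(s\<^sup>2) ^ (D-1) = s powr (real (2 * (D-1)))"
      by (simp only: powr_realpow power_mult)
    then show ?thesis using assms by (simp add: powr_powr of_nat_diff)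
  qed (use False assms in simp)
  ultimately show ?thesis using assms by (simp add: rpow_def powr_mult)
qed (simp add: rpow_def)

lemma mtrace_nonneg_of_diag_pos:
  assumes "S \<in> carrier_mat r r" "\<forall>i<r. S $$ (i,i) > 0"
  shows "mtrace S \<ge> 0"
  using assms unfolding mtrace_def by (intro sum_nonneg) (auto intro: less_imp_le)

lemma Tobj_lower_bound:
  assumes D1: "D \<ge> 1"
    and Sh: "Sh \<in> carrier_mat dx dx" and ShT: "Sh\<^sup>T = Sh" and Sh_sq: "Sh * Sh = Sig"
    and L: "L \<in> carrier_mat dy r" and LL: "L\<^sup>T * L = 1\<^sub>m r"
    and R: "R \<in> carrier_mat r dx" and RR: "R * R\<^sup>T = 1\<^sub>m r"
    and S: "S \<in> carrier_mat r r" and S_pos: "\<forall>i<r. S $$ (i,i) > 0"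
    and svd: "V * Sh = L * S * R"
    and feas: "feasible D dx dy r V W d"
  shows "Tobj D Sig W d \<ge> real D * rpow (mtrace S) (2 * (real D - 1) / real D)
                             * (real dy * mtrace Sig) powr (1 / real D)"
proof -
  have W: "\<forall>k\<in>{1..D}. W k \<in> carrier_mat (d k) (d (k-1))" and d: "d 0 = dx" "d D = dy"
    and V: "chain W d 0 D = V"
    using feas unfolding feasible_def by auto
  define a where "a k = frob_norm_sq (Amat D W d k)" for k
  define b where "b k = frob_norm_sq (Bmat W d k * Sh)" for k
  have aD: "a D = real dy" using d by (simp add: a_def Amat_def frob_norm_sq_one_mat)
  have b1: "b 1 = mtrace Sig"
    using d Sh ShT Sh_sq by (simp add: b_def Bmat_def mtrace_symmetric_square)
  have pair: "(mtrace S)\<^sup>2 \<le> a k * b (Suc k)" if k: "1 \<le> k" "k < D" for k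
  proof -
    have A: "Amat D W d k \<in> carrier_mat dy (d k)" using Amat_carrier[OF W] k d by auto
    have B: "Bmat W d (Suc k) \<in> carrier_mat (d k) dx" using Bmat_carrier[OF W, of "Suc k"] k d by auto
    have "Amat D W d k * (Bmat W d (Suc k) * Sh) = (Amat D W d k * Bmat W d (Suc k)) * Sh"
      by (rule assoc_mult_mat[OF A B Sh, symmetric])
    also have "\<dots> = L * S * R" using Amat_mult_Bmat_Suc[OF W k(2)] V svd by simp
    finally show ?thesis
      unfolding a_def b_def using mtrace_sq_le_of_factorization[OF A _ L LL R RR S] B Sh by auto
  qed
  have "real D * (a D * b 1 * ((mtrace S)\<^sup>2) ^ (D-1)) powr (1 / real D) \<le> (\<Sum>k=1..D. a k * b k)"
    using pair D1 by (intro sum_pairs_ge_amgm) (auto simp: a_def b_def frob_norm_sq_nonneg)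
  also have "\<dots> = Tobj D Sig W d"
    using Tobj_eq_sum_frob_norm_sq[OF W _ ShT Sh_sq] Sh d by (simp add: a_def b_def)
  finally show ?thesis
    using powr_mult_pow_eq_rpow[OF D1 mtrace_nonneg_of_diag_pos[OF S S_pos], of "real dy * mtrace Sig"]
      aD b1 frob_norm_sq_nonneg[of Sh] mtrace_symmetric_square[OF Sh ShT Sh_sq]
    by (simp add: mult.assoc)
qed

section \<open>Balanced factorizations\<close>

text \<open>\<open>cD\<close>, \<open>cm\<close> and \<open>c1\<close> are the scalings of \<open>W D\<close>, of the middle factors and of
  \<open>W 1 * Sh\<close> in the balanced minimizer. All quantities are exponentials of linear forms in
  the logarithms of \<open>s\<close>, \<open>y\<close>, \<open>\<sigma>\<close>, so each identity is linear in logarithms.\<close>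
lemma balanced_scales:
  fixes s y \<sigma> :: real
  assumes D: "D \<ge> 2" and pos: "s > 0" "y > 0" "\<sigma> > 0"
    and cD_eq: "cD = s powr (- (real D - 2) / (2 * real D)) * y powr ((real D - 1) / (2 * real D))
                 * \<sigma> powr (- 1 / (2 * real D))"
    and cm_eq: "cm = s powr (1 / real D) * (y * \<sigma>) powr (- 1 / (2 * real D))"
    and c1_eq: "c1 = s powr (- (real D - 2) / (2 * real D)) * y powr (- 1 / (2 * real D))
                 * \<sigma> powr ((real D - 1) / (2 * real D))"
    and E_eq: "E = s powr (2 * (real D - 1) / real D) * (y * \<sigma>) powr (1 / real D)"
  shows "cD * cm ^ (D-2) * c1 = 1" and "s * \<sigma> = E * c1\<^sup>2" and "y * s = E * cD\<^sup>2"
    and "s\<^sup>2 = E * cm\<^sup>2"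
proof -
  have "real D > 0" using D by simp
  define a b c where "a = ln s / (2 * real D)" and "b = ln y / (2 * real D)" and "c = ln \<sigma> / (2 * real D)"
  have ln: "ln s = 2 * real D * a" "ln y = 2 * real D * b" "ln \<sigma> = 2 * real D * c"
    "ln cD = (real D - 1) * b - (real D - 2) * a - c"
    "ln cm = 2 * a - b - c"
    "ln c1 = (real D - 1) * c - (real D - 2) * a - b"
    "ln E = 4 * (real D - 1) * a + 2 * b + 2 * c"
    using pos \<open>real D > 0\<close>
    by (simp_all add: a_def b_def c_def cD_eq cm_eq c1_eq E_eq ln_mult ln_powr field_simps)
  have pos': "cD > 0" "cm > 0" "c1 > 0" "E > 0" using pos by (simp_all add: cD_eq cm_eq c1_eq E_eq)
  have "ln (cD * cm ^ (D-2) * c1) = ln cD + real (D - 2) * ln cm + ln c1"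
    using pos' by (simp add: ln_mult ln_realpow)
  also have "\<dots> = ln 1" unfolding ln using D by (simp add: of_nat_diff algebra_simps)
  finally show "cD * cm ^ (D-2) * c1 = 1" using pos' by simp
  have "ln (s * \<sigma>) = ln s + ln \<sigma>" using pos pos' by (simp add: ln_mult ln_realpow)
  also have "\<dots> = ln E + 2 * ln c1" unfolding ln by (simp add: algebra_simps)
  also have "\<dots> = ln (E * c1\<^sup>2)" using pos pos' by (simp add: ln_mult ln_realpow)
  finally show "s * \<sigma> = E * c1\<^sup>2" using pos pos' by simp
  have "ln (y * s) = ln y + ln s" using pos pos' by (simp add: ln_mult ln_realpow)
  also have "\<dots> = ln E + 2 * ln cD" unfolding ln by (simp add: algebra_simps)
  also have "\<dots> = ln (E * cD\<^sup>2)" using pos pos' by (simp add: ln_mult ln_realpow)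
  finally show "y * s = E * cD\<^sup>2" using pos pos' by simp
  have "ln (s\<^sup>2) = 2 * ln s" using pos pos' by (simp add: ln_mult ln_realpow)
  also have "\<dots> = ln E + 2 * ln cm" unfolding ln by (simp add: algebra_simps)
  also have "\<dots> = ln (E * cm\<^sup>2)" using pos pos' by (simp add: ln_mult ln_realpow)
  finally show "s\<^sup>2 = E * cm\<^sup>2" using pos pos' by simp
qed

lemma balanced_value:
  fixes s y \<sigma> :: real
  assumes D: "D \<ge> 2" and pos: "s = 0 \<or> (s > 0 \<and> y > 0 \<and> \<sigma> > 0)"
    and cD_eq: "cD = s powr (- (real D - 2) / (2 * real D)) * y powr ((real D - 1) / (2 * real D))
                 * \<sigma> powr (- 1 / (2 * real D))"
    and cm_eq: "cm = s powr (1 / real D) * (y * \<sigma>) powr (- 1 / (2 * real D))"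
    and c1_eq: "c1 = s powr (- (real D - 2) / (2 * real D)) * y powr (- 1 / (2 * real D))
                 * \<sigma> powr ((real D - 1) / (2 * real D))"
  shows "(cD * cm ^ (D-2))\<^sup>2 * s * \<sigma> + y * (cm ^ (D-2) * c1)\<^sup>2 * s
      + real (D-2) * (cD * cm ^ (D-3) * c1)\<^sup>2 * s * s
      = real D * rpow s (2 * (real D - 1) / real D) * (y * \<sigma>) powr (1 / real D)"
proof (cases "s = 0")
  case False
  define E where "E = s powr (2 * (real D - 1) / real D) * (y * \<sigma>) powr (1 / real D)"
  note scales = balanced_scales[OF D _ _ _ cD_eq cm_eq c1_eq E_def]
  have prod: "cD * cm ^ (D-2) * c1 = 1" using scales(1) pos False by simp
  have "(cD * cm ^ (D-2))\<^sup>2 * s * \<sigma> = (cD * cm ^ (D-2))\<^sup>2 * (s * \<sigma>)" by simp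
  also have "\<dots> = E * (cD * cm ^ (D-2) * c1)\<^sup>2"
    using scales(2) pos False by (simp add: power_mult_distrib)
  finally have first: "(cD * cm ^ (D-2))\<^sup>2 * s * \<sigma> = E" using prod by simp
  have "y * (cm ^ (D-2) * c1)\<^sup>2 * s = (cm ^ (D-2) * c1)\<^sup>2 * (y * s)" by simp
  also have "\<dots> = E * (cD * cm ^ (D-2) * c1)\<^sup>2"
    using scales(3) pos False by (simp add: power_mult_distrib)
  finally have last: "y * (cm ^ (D-2) * c1)\<^sup>2 * s = E" using prod by simp
  have middle: "real (D-2) * (cD * cm ^ (D-3) * c1)\<^sup>2 * s * s = real (D-2) * E"
  proof (cases "D = 2")
    case False
    then have "D - 2 = Suc (D - 3)" using D by arith
    then have "cD * cm ^ (D-3) * cm * c1 = 1" using prod by (simp add: ac_simps)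
    moreover have "(cD * cm ^ (D-3) * c1)\<^sup>2 * s * s = E * (cD * cm ^ (D-3) * cm * c1)\<^sup>2"
      using scales(4) pos \<open>s \<noteq> 0\<close> by (simp add: power_mult_distrib power2_eq_square[of s, symmetric])
    ultimately show ?thesis by simp
  qed simp
  have "2 * (real D - 1) / real D \<noteq> 0" using D by simp
  then show ?thesis
    using first last middle D by (simp add: E_def rpow_def of_nat_diff algebra_simps)
next
  case True
  have "2 * (real D - 1) / real D \<noteq> 0" using D by simp
  then show ?thesis using True by (simp add: rpow_def)
qed

lemma smult_mult_smult_mat:
  fixes M N :: "real mat"
  assumes "M \<in> carrier_mat p m" "N \<in> carrier_mat m q"
  shows "(a \<cdot>\<^sub>m M) * (b \<cdot>\<^sub>m N) = (a * b) \<cdot>\<^sub>m (M * N)"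
  using assms by (auto intro!: eq_matI simp: mult_smult_assoc_mat[of _ p m] mult_smult_distrib[of _ p m])

lemma mult_transpose_isometry_cancel:
  fixes X U Y :: "real mat"
  assumes X: "X \<in> carrier_mat p r" and U: "U \<in> carrier_mat m r" and UU: "U\<^sup>T * U = 1\<^sub>m r"
    and Y: "Y \<in> carrier_mat r q"
  shows "(X * U\<^sup>T) * (U * Y) = X * Y"
proof -
  have "(X * U\<^sup>T) * (U * Y) = X * (U\<^sup>T * (U * Y))" using X U Y by (intro assoc_mult_mat) auto
  also have "U\<^sup>T * (U * Y) = (U\<^sup>T * U) * Y" using U Y by (intro assoc_mult_mat[symmetric]) auto
  finally show ?thesis using UU Y by simp
qed

lemma Amat_eq_Amat_Suc_mult:
  assumes "\<forall>k\<in>{1..D}. W k \<in> carrier_mat (d k) (d (k-1))" "k < D"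
  shows "Amat D W d k = Amat D W d (Suc k) * W (Suc k)"
  using assms chain_Suc_right[of k "D - Suc k" W d] by (simp add: Amat_def Suc_diff_Suc)

lemma Bmat_Suc: "1 \<le> k \<Longrightarrow> Bmat W d (Suc k) = W k * Bmat W d k"
  by (cases k) (simp_all add: Bmat_def)

context
  fixes D r :: nat and W U :: "nat \<Rightarrow> real mat" and d :: "nat \<Rightarrow> nat" and cm :: real
  assumes D2: "D \<ge> 2"
    and W: "\<forall>k\<in>{1..D}. W k \<in> carrier_mat (d k) (d (k-1))"
    and U: "\<forall>i\<in>{1..D-1}. U i \<in> carrier_mat (d i) r \<and> (U i)\<^sup>T * U i = 1\<^sub>m r"
    and Wk: "\<forall>k\<in>{2..D-1}. W k = cm \<cdot>\<^sub>m (U k * (U (k-1))\<^sup>T)"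
begin

lemma Amat_balanced:
  assumes X: "X \<in> carrier_mat (d D) r" and WD: "W D = cD \<cdot>\<^sub>m (X * (U (D-1))\<^sup>T)"
    and k: "1 \<le> k" "k \<le> D - 1"
  shows "Amat D W d k = (cD * cm ^ (D-1-k)) \<cdot>\<^sub>m (X * (U k)\<^sup>T)"
  using k(2,1)
proof (induction k rule: inc_induct)
  case base
  have "W D \<in> carrier_mat (d D) (d (D-1))" using bspec[OF W, of D] D2 by simp
  then have "Amat D W d (D-1) = W D"
    using Amat_eq_Amat_Suc_mult[OF W, of "D-1"] D2 by (simp add: Amat_def)
  then show ?case using WD by simp
next
  case (step n)
  have Un: "U n \<in> carrier_mat (d n) r" and Un': "U (Suc n) \<in> carrier_mat (d (Suc n)) r"
    "(U (Suc n))\<^sup>T * U (Suc n) = 1\<^sub>m r"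
    using U step by auto
  have "Amat D W d n = Amat D W d (Suc n) * W (Suc n)"
    using Amat_eq_Amat_Suc_mult[OF W] step by simp
  also have "\<dots> = ((cD * cm ^ (D-1-Suc n)) \<cdot>\<^sub>m (X * (U (Suc n))\<^sup>T))
      * (cm \<cdot>\<^sub>m (U (Suc n) * (U n)\<^sup>T))"
    using step Wk by simp
  also have "\<dots> = (cD * cm ^ (D-1-Suc n) * cm) \<cdot>\<^sub>m (X * (U n)\<^sup>T)"
    using X Un Un' by (simp add: smult_mult_smult_mat[of _ "d D" "d (Suc n)" _ "d n"]
        mult_transpose_isometry_cancel[of _ "d D" r _ "d (Suc n)" _ "d n"])
  also have "cD * cm ^ (D-1-Suc n) * cm = cD * cm ^ (D-1-n)"
    using step by (simp add: Suc_diff_Suc[symmetric] mult.assoc)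
  finally show ?case .
qed

lemma Bmat_mult_balanced:
  assumes Y: "Y \<in> carrier_mat r (d 0)" and Sh: "Sh \<in> carrier_mat (d 0) (d 0)"
    and W1: "W 1 * Sh = c1 \<cdot>\<^sub>m (U 1 * Y)"
    and k: "2 \<le> k" "k \<le> D"
  shows "Bmat W d k * Sh = (cm ^ (k-2) * c1) \<cdot>\<^sub>m (U (k-1) * Y)"
  using k
proof (induction k rule: nat_induct_at_least)
  case base
  have "W 1 \<in> carrier_mat (d 1) (d 0)" using bspec[OF W, of 1] D2 by simp
  then show ?case using W1 by (simp add: Bmat_def numeral_2_eq_2)
next
  case (Suc k)
  have "k \<in> {1..D-1}" "k - 1 \<in> {1..D-1}" using Suc by auto
  then have Uk: "U k \<in> carrier_mat (d k) r" and Uk': "U (k-1) \<in> carrier_mat (d (k-1)) r"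
    "(U (k-1))\<^sup>T * U (k-1) = 1\<^sub>m r"
    using bspec[OF U] by auto
  have Wkk: "W k \<in> carrier_mat (d k) (d (k-1))" using W Suc by auto
  have B: "Bmat W d k \<in> carrier_mat (d (k-1)) (d 0)" using Bmat_carrier[OF W] Suc by auto
  have "Bmat W d (Suc k) * Sh = W k * (Bmat W d k * Sh)"
    using Bmat_Suc[of k W d] Suc by (simp add: assoc_mult_mat[OF Wkk B Sh])
  also have "\<dots> = (cm \<cdot>\<^sub>m (U k * (U (k-1))\<^sup>T)) * ((cm ^ (k-2) * c1) \<cdot>\<^sub>m (U (k-1) * Y))"
    using Suc Wk by simp
  also have "\<dots> = (cm * (cm ^ (k-2) * c1)) \<cdot>\<^sub>m (U k * Y)"
    using Y Uk Uk' by (simp add: smult_mult_smult_mat[of _ "d k" "d (k-1)" _ "d 0"]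
        mult_transpose_isometry_cancel[of _ "d k" r _ "d (k-1)" _ "d 0"])
  also have "cm * (cm ^ (k-2) * c1) = cm ^ (Suc k - 2) * c1"
    using Suc by (metis Suc_diff_le mult.assoc power_Suc)
  finally show ?case by simp
qed

lemma chain_balanced:
  assumes X: "X \<in> carrier_mat (d D) r" and WD: "W D = cD \<cdot>\<^sub>m (X * (U (D-1))\<^sup>T)"
    and Y: "Y \<in> carrier_mat r (d 0)" and Sh: "Sh \<in> carrier_mat (d 0) (d 0)"
    and W1: "W 1 * Sh = c1 \<cdot>\<^sub>m (U 1 * Y)"
  shows "chain W d 0 D * Sh = (cD * cm ^ (D-2) * c1) \<cdot>\<^sub>m (X * Y)"
proof -
  have A: "Amat D W d 1 \<in> carrier_mat (d D) (d 1)" using Amat_carrier[OF W] D2 by simp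
  have B: "Bmat W d 2 \<in> carrier_mat (d 1) (d 0)" using Bmat_carrier[OF W, of 2] D2 by simp
  have U1: "U 1 \<in> carrier_mat (d 1) r" "(U 1)\<^sup>T * U 1 = 1\<^sub>m r" using bspec[OF U, of 1] D2 by auto
  have "chain W d 0 D = Amat D W d 1 * Bmat W d 2"
    using Amat_mult_Bmat_Suc[OF W, of 1] D2 by (simp add: numeral_2_eq_2)
  have "chain W d 0 D * Sh = Amat D W d 1 * (Bmat W d 2 * Sh)"
    unfolding \<open>chain W d 0 D = _\<close> by (rule assoc_mult_mat[OF A B Sh])
  also have "\<dots> = ((cD * cm ^ (D-2)) \<cdot>\<^sub>m (X * (U 1)\<^sup>T)) * (c1 \<cdot>\<^sub>m (U 1 * Y))"
    using Amat_balanced[OF X WD, of 1] Bmat_mult_balanced[OF Y Sh W1, of 2] D2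
    by (simp add: numeral_2_eq_2)
  also have "\<dots> = (cD * cm ^ (D-2) * c1) \<cdot>\<^sub>m (X * Y)"
    using X Y U1 by (simp add: smult_mult_smult_mat[of _ "d D" "d 1" _ "d 0"]
        mult_transpose_isometry_cancel[of _ "d D" r _ "d 1" _ "d 0"])
  finally show ?thesis .
qed

lemma Tobj_balanced:
  assumes X: "X \<in> carrier_mat (d D) r" and WD: "W D = cD \<cdot>\<^sub>m (X * (U (D-1))\<^sup>T)"
    and Y: "Y \<in> carrier_mat r (d 0)" and W1: "W 1 * Sh = c1 \<cdot>\<^sub>m (U 1 * Y)"
    and Sh: "Sh \<in> carrier_mat (d 0) (d 0)" and ShT: "Sh\<^sup>T = Sh" and Sh_sq: "Sh * Sh = Sig"
  shows "Tobj D Sig W d = (cD * cm ^ (D-2))\<^sup>2 * frob_norm_sq X * mtrace Sig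
    + real (d D) * (cm ^ (D-2) * c1)\<^sup>2 * frob_norm_sq Y
    + real (D-2) * (cD * cm ^ (D-3) * c1)\<^sup>2 * frob_norm_sq X * frob_norm_sq Y"
proof -
  define f where "f k = frob_norm_sq (Amat D W d k) * frob_norm_sq (Bmat W d k * Sh)" for k
  have fA: "frob_norm_sq (Amat D W d k) = (cD * cm ^ (D-1-k))\<^sup>2 * frob_norm_sq X"
    if "1 \<le> k" "k \<le> D-1" for k
  proof -
    have "U k \<in> carrier_mat (d k) r" "(U k)\<^sup>T * U k = 1\<^sub>m r" using bspec[OF U, of k] that by auto
    then show ?thesis
      using Amat_balanced[OF X WD that] X
      by (simp add: frob_norm_sq_smult frob_norm_sq_mult_coisometry[of "(U k)\<^sup>T" r "d k"])
  qed
  have fB: "frob_norm_sq (Bmat W d k * Sh) = (cm ^ (k-2) * c1)\<^sup>2 * frob_norm_sq Y"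
    if "2 \<le> k" "k \<le> D" for k
  proof -
    have "k - 1 \<in> {1..D-1}" using that by auto
    then have "U (k-1) \<in> carrier_mat (d (k-1)) r" "(U (k-1))\<^sup>T * U (k-1) = 1\<^sub>m r"
      using bspec[OF U] by auto
    then show ?thesis
      using Bmat_mult_balanced[OF Y Sh W1 that] Y
      by (simp add: frob_norm_sq_smult frob_norm_sq_isometry_mult[of _ "d (k-1)" r])
  qed
  have "f 1 = (cD * cm ^ (D-2))\<^sup>2 * frob_norm_sq X * mtrace Sig"
    using fA[of 1] D2 Sh ShT Sh_sq by (simp add: f_def Bmat_def mtrace_symmetric_square numeral_2_eq_2)
  moreover have "f D = real (d D) * (cm ^ (D-2) * c1)\<^sup>2 * frob_norm_sq Y"
    using fB[of D] D2 by (simp add: f_def Amat_def frob_norm_sq_one_mat)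
  moreover have "f k = (cD * cm ^ (D-3) * c1)\<^sup>2 * frob_norm_sq X * frob_norm_sq Y"
    if "2 \<le> k" "k \<le> D-1" for k
  proof -
    have "D-3 = (D-1-k) + (k-2)" using that by arith
    then have "cm ^ (D-1-k) * cm ^ (k-2) = cm ^ (D-3)" by (simp only: power_add)
    moreover have "f k = (cD * (cm ^ (D-1-k) * cm ^ (k-2)) * c1)\<^sup>2 * frob_norm_sq X * frob_norm_sq Y"
      using fA[of k] fB[of k] that by (simp add: f_def power_mult_distrib ac_simps)
    ultimately show ?thesis by simp
  qed
  moreover have "(\<Sum>k=1..D. f k) = f 1 + (\<Sum>k=2..D-1. f k) + f D"
  proof -
    obtain m where m: "D = Suc (Suc m)" using D2 by (metis add_2_eq_Suc le_Suc_ex)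
    show ?thesis by (simp add: m sum.atLeast_Suc_atMost numeral_2_eq_2)
  qed
  ultimately have "(\<Sum>k=1..D. f k) = (cD * cm ^ (D-2))\<^sup>2 * frob_norm_sq X * mtrace Sig
    + real (d D) * (cm ^ (D-2) * c1)\<^sup>2 * frob_norm_sq Y
    + real (D-2) * (cD * cm ^ (D-3) * c1)\<^sup>2 * frob_norm_sq X * frob_norm_sq Y"
    using D2 by simp
  then show ?thesis
    using Tobj_eq_sum_frob_norm_sq[OF W Sh ShT Sh_sq] by (simp add: f_def)
qed

end

lemma diag_sqrt_carrier [simp]: "S \<in> carrier_mat r r \<Longrightarrow> diag_sqrt S \<in> carrier_mat r r"
  by (simp add: diag_sqrt_def)

lemma diag_sqrt_mult_self:
  assumes S: "S \<in> carrier_mat r r" and "diagonal_mat S" and nonneg: "\<forall>i<r. S $$ (i,i) \<ge> 0"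
  shows "diag_sqrt S * diag_sqrt S = S"
proof (rule eq_matI)
  fix i j assume ij: "i < dim_row S" "j < dim_col S"
  have "(diag_sqrt S * diag_sqrt S) $$ (i,j)
      = (\<Sum>k<r. (if i = k then sqrt (S $$ (i,i)) else 0) * (if k = j then sqrt (S $$ (k,k)) else 0))"
    using S ij by (simp add: diag_sqrt_def scalar_prod_def atLeast0LessThan)
  also have "\<dots> = (if i = j then S $$ (i,i) else 0)"
    using ij S nonneg by (auto simp: if_distrib[of "\<lambda>x. x * _"] cong: if_cong)
  also have "\<dots> = S $$ (i,j)" using \<open>diagonal_mat S\<close> ij unfolding diagonal_mat_def by auto
  finally show "(diag_sqrt S * diag_sqrt S) $$ (i,j) = S $$ (i,j)" .
qed (use S in \<open>auto simp: diag_sqrt_def\<close>)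

lemma frob_norm_sq_diag_sqrt:
  assumes S: "S \<in> carrier_mat r r" and nonneg: "\<forall>i<r. S $$ (i,i) \<ge> 0"
  shows "frob_norm_sq (diag_sqrt S) = mtrace S"
proof -
  have "frob_norm_sq (diag_sqrt S) = (\<Sum>i<r. \<Sum>j<r. if i = j then S $$ (i,i) else 0)"
    using S nonneg
    by (auto simp: frob_norm_sq_def diag_sqrt_def if_distrib[of "\<lambda>x. x\<^sup>2"] cong: if_cong intro!: sum.cong)
  then show ?thesis using S by (simp add: mtrace_def)
qed

lemma svd_sqrt_split:
  assumes L: "L \<in> carrier_mat p r" and LL: "L\<^sup>T * L = 1\<^sub>m r"
    and R: "R \<in> carrier_mat r q" and RR: "R * R\<^sup>T = 1\<^sub>m r"
    and S: "S \<in> carrier_mat r r" and S_diag: "diagonal_mat S" and nonneg: "\<forall>i<r. S $$ (i,i) \<ge> 0"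
  shows "frob_norm_sq (L * diag_sqrt S) = mtrace S" and "frob_norm_sq (diag_sqrt S * R) = mtrace S"
    and "(L * diag_sqrt S) * (diag_sqrt S * R) = L * S * R"
proof -
  have S2: "diag_sqrt S \<in> carrier_mat r r" using S by simp
  show "frob_norm_sq (L * diag_sqrt S) = mtrace S"
    using S nonneg by (simp add: frob_norm_sq_isometry_mult[OF L LL S2] frob_norm_sq_diag_sqrt)
  show "frob_norm_sq (diag_sqrt S * R) = mtrace S"
    using S nonneg by (simp add: frob_norm_sq_mult_coisometry[OF R RR S2] frob_norm_sq_diag_sqrt)
  have "(L * diag_sqrt S) * (diag_sqrt S * R) = L * ((diag_sqrt S * diag_sqrt S) * R)"
    using L S2 R by (simp add: assoc_mult_mat[OF L S2, of "diag_sqrt S * R" q] assoc_mult_mat[OF S2 S2 R])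
  also have "\<dots> = L * S * R"
    using L S R by (simp add: diag_sqrt_mult_self[OF S S_diag nonneg] assoc_mult_mat[OF L S R])
  finally show "(L * diag_sqrt S) * (diag_sqrt S * R) = L * S * R" .
qed

definition diag_inv_sqrt :: "real mat \<Rightarrow> real mat" where
  "diag_inv_sqrt S = mat (dim_row S) (dim_col S) (\<lambda>(i,j). if i = j then 1 / sqrt (S $$ (i,i)) else 0)"

lemma diag_inv_sqrt_carrier [simp]: "S \<in> carrier_mat r r \<Longrightarrow> diag_inv_sqrt S \<in> carrier_mat r r"
  by (simp add: diag_inv_sqrt_def)

lemma diag_inv_sqrt_mult:
  assumes S: "S \<in> carrier_mat r r" and "diagonal_mat S" and pos: "\<forall>i<r. S $$ (i,i) > 0"
  shows "diag_inv_sqrt S * S = diag_sqrt S"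
proof (rule eq_matI)
  fix i j assume "i < dim_row (diag_sqrt S)" "j < dim_col (diag_sqrt S)"
  then have ij: "i < r" "j < r" using S by (auto simp: diag_sqrt_def)
  have "(diag_inv_sqrt S * S) $$ (i,j) = S $$ (i,j) / sqrt (S $$ (i,i))"
    using S ij by (simp add: diag_inv_sqrt_def scalar_prod_def if_distrib[of "\<lambda>x. x * _"] cong: if_cong)
  also have "\<dots> = diag_sqrt S $$ (i,j)"
    using \<open>diagonal_mat S\<close> pos S ij by (auto simp: diag_sqrt_def diagonal_mat_def real_div_sqrt)
  finally show "(diag_inv_sqrt S * S) $$ (i,j) = diag_sqrt S $$ (i,j)" .
qed (use S in \<open>auto simp: diag_inv_sqrt_def diag_sqrt_def\<close>)

lemma mult_diag_inv_sqrt_svd: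
  assumes P: "P \<in> carrier_mat m r"
    and L: "L \<in> carrier_mat dy r" and LL: "L\<^sup>T * L = 1\<^sub>m r" and R: "R \<in> carrier_mat r dx"
    and S: "S \<in> carrier_mat r r" and S_diag: "diagonal_mat S" and S_pos: "\<forall>i<r. S $$ (i,i) > 0"
    and V: "V \<in> carrier_mat dy dx" and Sh: "Sh \<in> carrier_mat dx dx" and svd: "V * Sh = L * S * R"
  shows "(P * diag_inv_sqrt S * L\<^sup>T * V) * Sh = P * diag_sqrt S * R"
proof -
  have PS: "P * diag_inv_sqrt S \<in> carrier_mat m r" using P S by simp
  have LT: "L\<^sup>T \<in> carrier_mat r dy" and SR: "S * R \<in> carrier_mat r dx" using L S R by auto
  have "(P * diag_inv_sqrt S * L\<^sup>T * V) * Sh = (P * diag_inv_sqrt S * L\<^sup>T) * (V * Sh)"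
    using PS LT V Sh by (intro assoc_mult_mat) auto
  also have "\<dots> = (P * diag_inv_sqrt S) * (L\<^sup>T * (L * (S * R)))"
    unfolding svd assoc_mult_mat[OF L S R] by (rule assoc_mult_mat[OF PS LT mult_carrier_mat[OF L SR]])
  also have "L\<^sup>T * (L * (S * R)) = S * R"
    using LL by (simp add: assoc_mult_mat[OF LT L SR, symmetric] left_mult_one_mat[OF SR])
  also have "(P * diag_inv_sqrt S) * (S * R) = P * ((diag_inv_sqrt S * S) * R)"
    using P S R by (simp add: assoc_mult_mat[of _ m r _ r _ dx] assoc_mult_mat[of _ r r S r R dx])
  also have "\<dots> = P * diag_sqrt S * R"
    using P S R by (simp add: diag_inv_sqrt_mult[OF S S_diag S_pos] assoc_mult_mat[of _ m r _ r _ dx])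
  finally show ?thesis .
qed

definition coord_isometry :: "nat \<Rightarrow> nat \<Rightarrow> real mat" where
  "coord_isometry n r = mat n r (\<lambda>(i,j). if i = j then 1 else 0)"

lemma coord_isometry_carrier [simp]: "coord_isometry n r \<in> carrier_mat n r"
  by (simp add: coord_isometry_def)

lemma coord_isometry_orthonormal:
  assumes "r \<le> n"
  shows "(coord_isometry n r)\<^sup>T * coord_isometry n r = 1\<^sub>m r"
proof (rule eq_matI)
  fix a b assume ab: "a < dim_row (1\<^sub>m r :: real mat)" "b < dim_col (1\<^sub>m r :: real mat)"
  have "((coord_isometry n r)\<^sup>T * coord_isometry n r) $$ (a,b)
      = (\<Sum>k\<in>{0..<n}. (if k = a then 1 else 0) * (if k = b then 1 else 0))"
    using ab by (simp add: coord_isometry_def scalar_prod_def)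
  also have "\<dots> = (1\<^sub>m r :: real mat) $$ (a,b)" using ab assms
    by (auto simp: if_distrib[of "\<lambda>x. x * _"] cong: if_cong)
  finally show "((coord_isometry n r)\<^sup>T * coord_isometry n r) $$ (a,b) = (1\<^sub>m r :: real mat) $$ (a,b)" .
qed (auto simp: coord_isometry_def)

lemma pos_def_mat_mtrace_pos:
  assumes M: "pos_def_mat n M" and "n > 0"
  shows "mtrace M > 0"
proof -
  have C: "M \<in> carrier_mat n n"
    and pd: "\<forall>x \<in> carrier_vec n. x \<noteq> 0\<^sub>v n \<longrightarrow> x \<bullet> (M *\<^sub>v x) > 0"
    using M unfolding pos_def_mat_def by auto
  have "M $$ (i,i) > 0" if "i < n" for i
  proof -
    have "unit_vec n i \<noteq> (0\<^sub>v n :: real vec)" using that by (simp add: unit_vec_nonzero)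
    then have "unit_vec n i \<bullet> (M *\<^sub>v unit_vec n i) > 0" using pd by simp
    then show ?thesis using C that by simp
  qed
  then show ?thesis using C \<open>n > 0\<close> unfolding mtrace_def by (intro sum_pos) auto
qed

lemma pos_def_mat_mult_right_cancel:
  assumes M: "pos_def_mat n M" and X: "X \<in> carrier_mat m n" and Y: "Y \<in> carrier_mat m n"
    and eq: "X * M = Y * M"
  shows "X = Y"
proof -
  have C: "M \<in> carrier_mat n n" and MT: "M\<^sup>T = M"
    and pd: "\<forall>x \<in> carrier_vec n. x \<noteq> 0\<^sub>v n \<longrightarrow> x \<bullet> (M *\<^sub>v x) > 0"
    using M unfolding pos_def_mat_def by auto
  have "row X i = row Y i" if i: "i < m" for i
  proof -
    define v where "v = row X i - row Y i"
    have v: "v \<in> carrier_vec n" using X Y unfolding v_def carrier_vec_def by auto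
    have "col (M * X\<^sup>T) i = M *\<^sub>v row X i" "col (M * Y\<^sup>T) i = M *\<^sub>v row Y i"
      using C X Y i by (simp_all add: mult_mat_vec_def)
    moreover have "row X i \<in> carrier_vec n" "row Y i \<in> carrier_vec n" using X Y i by simp_all
    ultimately have "M *\<^sub>v v = col (M * X\<^sup>T) i - col (M * Y\<^sup>T) i"
      by (simp add: v_def mult_minus_distrib_mat_vec[OF C])
    also have "M * X\<^sup>T = (X * M)\<^sup>T" using C X MT by (simp add: transpose_mult[OF X C])
    also have "M * Y\<^sup>T = (Y * M)\<^sup>T" using C Y MT by (simp add: transpose_mult[OF Y C])
    finally have "M *\<^sub>v v = 0\<^sub>v n"
      using eq C Y i minus_cancel_vec[of "col (Y * M)\<^sup>T i" n] by simp
    then have "v = 0\<^sub>v n" using pd v by fastforce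
    then have "row X i $ j = row Y i $ j" if "j < n" for j
    proof -
      have "(row X i - row Y i) $ j = 0" using \<open>v = 0\<^sub>v n\<close> that by (simp add: v_def)
      then show ?thesis using Y that by (simp add: carrier_matD)
    qed
    then show ?thesis using X Y by (intro eq_vecI) auto
  qed
  then show ?thesis using X Y by (intro eq_rowI) auto
qed

lemma Tobj_balanced_minimizer:
  fixes D dx dy r :: nat and V Sig Sh L S R :: "real mat"
  assumes D2: "D \<ge> 2"
    and V: "V \<in> carrier_mat dy dx"
    and Sig_pd: "pos_def_mat dx Sig"
    and Sh_pd: "pos_def_mat dx Sh" and Sh_sq: "Sh * Sh = Sig"
    and L: "L \<in> carrier_mat dy r" and LL: "L\<^sup>T * L = 1\<^sub>m r"
    and R: "R \<in> carrier_mat r dx" and RR: "R * R\<^sup>T = 1\<^sub>m r"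
    and S: "S \<in> carrier_mat r r" and S_diag: "diagonal_mat S"
    and S_pos: "\<forall>i<r. S $$ (i,i) > 0"
    and svd: "V * Sh = L * S * R"
    and d0: "d 0 = dx" and dD: "d D = dy" and dr: "\<forall>k\<le>D. r \<le> d k"
    and U: "\<forall>i\<in>{1..D-1}. U i \<in> carrier_mat (d i) r \<and> (U i)\<^sup>T * U i = 1\<^sub>m r"
    and W: "\<forall>k\<in>{1..D}. W k \<in> carrier_mat (d k) (d (k - 1))"
    and WD: "W D = (mtrace S powr (- (real D - 2) / (2 * real D)) * real dy powr ((real D - 1) / (2 * real D))
                 * mtrace Sig powr (- 1 / (2 * real D))) \<cdot>\<^sub>m (L * diag_sqrt S * (U (D - 1))\<^sup>T)"
    and Wk: "\<forall>k\<in>{2..D-1}. W k = (mtrace S powr (1 / real D) * (real dy * mtrace Sig) powr (- 1 / (2 * real D)))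
                 \<cdot>\<^sub>m (U k * (U (k - 1))\<^sup>T)"
    and W1: "W 1 * Sh = (mtrace S powr (- (real D - 2) / (2 * real D)) * real dy powr (- 1 / (2 * real D))
                 * mtrace Sig powr ((real D - 1) / (2 * real D))) \<cdot>\<^sub>m (U 1 * diag_sqrt S * R)"
  shows "feasible D dx dy r V W d \<and>
        Tobj D Sig W d = real D * rpow (mtrace S) (2 * (real D - 1) / real D)
                             * (real dy * mtrace Sig) powr (1 / real D)"
proof -
  define s y \<sigma> where "s = mtrace S" and "y = real dy" and "\<sigma> = mtrace Sig"
  define cD where "cD = s powr (- (real D - 2) / (2 * real D)) * y powr ((real D - 1) / (2 * real D))
                 * \<sigma> powr (- 1 / (2 * real D))"
  define cm where "cm = s powr (1 / real D) * (y * \<sigma>) powr (- 1 / (2 * real D))"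
  define c1 where "c1 = s powr (- (real D - 2) / (2 * real D)) * y powr (- 1 / (2 * real D))
                 * \<sigma> powr ((real D - 1) / (2 * real D))"
  define X Y where "X = L * diag_sqrt S" and "Y = diag_sqrt S * R"
  have Sh: "Sh \<in> carrier_mat dx dx" and ShT: "Sh\<^sup>T = Sh" using Sh_pd by (auto simp: pos_def_mat_def)
  have S_nonneg: "\<forall>i<r. S $$ (i,i) \<ge> 0" using S_pos by (auto intro: less_imp_le)
  have X: "X \<in> carrier_mat (d D) r" and Y: "Y \<in> carrier_mat r (d 0)"
    using L R S dD d0 by (auto simp: X_def Y_def intro!: mult_carrier_mat)
  have U1: "U 1 \<in> carrier_mat (d 1) r" using U D2 by auto
  have WD': "W D = cD \<cdot>\<^sub>m (X * (U (D-1))\<^sup>T)"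
    using WD by (simp add: cD_def X_def s_def y_def \<sigma>_def)
  have Wk': "\<forall>k\<in>{2..D-1}. W k = cm \<cdot>\<^sub>m (U k * (U (k-1))\<^sup>T)"
    using Wk by (simp add: cm_def s_def y_def \<sigma>_def)
  have W1': "W 1 * Sh = c1 \<cdot>\<^sub>m (U 1 * Y)"
    using W1 U1 S R by (simp add: c1_def Y_def s_def y_def \<sigma>_def assoc_mult_mat[of _ "d 1" r _ r])
  note split = svd_sqrt_split[OF L LL R RR S S_diag S_nonneg, folded X_def Y_def s_def]
  have chain: "chain W d 0 D * Sh = (cD * cm ^ (D-2) * c1) \<cdot>\<^sub>m (L * S * R)"
    using chain_balanced[OF D2 W U Wk' X WD' Y _ W1'] Sh d0 split(3) by simp
  have T: "Tobj D Sig W d = (cD * cm ^ (D-2))\<^sup>2 * s * \<sigma> + y * (cm ^ (D-2) * c1)\<^sup>2 * s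
      + real (D-2) * (cD * cm ^ (D-3) * c1)\<^sup>2 * s * s"
    using Tobj_balanced[OF D2 W U Wk' X WD' Y W1' _ ShT Sh_sq] Sh d0 dD split(1,2)
    by (simp add: y_def \<sigma>_def ac_simps)
  have s0: "s = 0" if "r = 0" using S that by (simp add: s_def mtrace_def)
  have pos: "s > 0 \<and> y > 0 \<and> \<sigma> > 0" if "r > 0"
  proof (intro conjI)
    show "s > 0" using S S_pos that by (auto simp: s_def mtrace_def intro!: sum_pos)
    show "y > 0" using dr dD that by (auto simp: y_def)
    show "\<sigma> > 0" using pos_def_mat_mtrace_pos[OF Sig_pd] dr d0 that by (auto simp: \<sigma>_def)
  qed
  have "(cD * cm ^ (D-2) * c1) \<cdot>\<^sub>m (L * S * R) = L * S * R"
  proof (cases "r = 0")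
    case True
    \<comment> \<open>the scalings are junk values \<open>0 powr _\<close>, but \<open>L * S * R = 0\<close>\<close>
    then have "L * S * R = 0\<^sub>m dy dx" using L S R by (auto intro!: eq_matI simp: scalar_prod_def)
    then show ?thesis by simp
  next
    case False
    then have "cD * cm ^ (D-2) * c1 = 1" using pos balanced_scales(1)[OF D2 _ _ _ cD_def cm_def c1_def] by simp
    then show ?thesis by (auto intro!: eq_matI)
  qed
  moreover have "chain W d 0 D \<in> carrier_mat dy dx"
    using chain_carrier[of 0 D W d] W d0 dD by simp
  ultimately have "chain W d 0 D = V"
    using chain svd pos_def_mat_mult_right_cancel[OF Sh_pd _ V] by simp
  moreover have "Tobj D Sig W d = real D * rpow s (2 * (real D - 1) / real D) * (y * \<sigma>) powr (1 / real D)"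
    using T balanced_value[OF D2 _ cD_def cm_def c1_def] s0 pos by (cases "r = 0") auto
  ultimately show ?thesis using W d0 dD dr by (simp add: feasible_def s_def y_def \<sigma>_def)
qed

lemma Tobj_minimizer_exists:
  fixes D dx dy r :: nat and V Sig Sh L S R :: "real mat"
  assumes D1: "D \<ge> 1"
    and V: "V \<in> carrier_mat dy dx"
    and Sig_pd: "pos_def_mat dx Sig"
    and Sh_pd: "pos_def_mat dx Sh" and Sh_sq: "Sh * Sh = Sig"
    and L: "L \<in> carrier_mat dy r" and LL: "L\<^sup>T * L = 1\<^sub>m r"
    and R: "R \<in> carrier_mat r dx" and RR: "R * R\<^sup>T = 1\<^sub>m r"
    and S: "S \<in> carrier_mat r r" and S_diag: "diagonal_mat S"
    and S_pos: "\<forall>i<r. S $$ (i,i) > 0"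
    and svd: "V * Sh = L * S * R"
    and d0: "d 0 = dx" and dD: "d D = dy" and dr: "\<forall>k\<le>D. r \<le> d k"
  shows "\<exists>W. feasible D dx dy r V W d \<and>
           Tobj D Sig W d = real D * rpow (mtrace S) (2 * (real D - 1) / real D)
                             * (real dy * mtrace Sig) powr (1 / real D)"
proof (cases "D = 1")
  case True
  have Sh: "Sh \<in> carrier_mat dx dx" and ShT: "Sh\<^sup>T = Sh" using Sh_pd by (auto simp: pos_def_mat_def)
  define W where "W = (\<lambda>k::nat. V)"
  have feas: "feasible D dx dy r V W d" using True d0 dD dr V by (simp add: feasible_def W_def)
  have "Tobj D Sig W d = real dy * mtrace Sig"
    using Tobj_single_factor[of Sh d Sig W] True d0 dD V Sh ShT Sh_sq by (simp add: W_def)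
  moreover have "mtrace Sig \<ge> 0"
    using Sh ShT Sh_sq by (simp add: mtrace_symmetric_square frob_norm_sq_nonneg)
  ultimately show ?thesis using feas True by (auto simp: rpow_def)
next
  case False
  then have D2: "D \<ge> 2" using D1 by simp
  have Sh: "Sh \<in> carrier_mat dx dx" using Sh_pd by (simp add: pos_def_mat_def)
  define U where "U i = coord_isometry (d i) r" for i
  define cD where "cD = mtrace S powr (- (real D - 2) / (2 * real D))
    * real dy powr ((real D - 1) / (2 * real D)) * mtrace Sig powr (- 1 / (2 * real D))"
  define cm where "cm = mtrace S powr (1 / real D) * (real dy * mtrace Sig) powr (- 1 / (2 * real D))"
  define c1 where "c1 = mtrace S powr (- (real D - 2) / (2 * real D))
    * real dy powr (- 1 / (2 * real D)) * mtrace Sig powr ((real D - 1) / (2 * real D))"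
  define W where "W k = (if k = D then cD \<cdot>\<^sub>m (L * diag_sqrt S * (U (D - 1))\<^sup>T)
      else if k = 1 then c1 \<cdot>\<^sub>m (U 1 * diag_inv_sqrt S * L\<^sup>T * V)
      else cm \<cdot>\<^sub>m (U k * (U (k - 1))\<^sup>T))" for k
  have U: "U i \<in> carrier_mat (d i) r" "(U i)\<^sup>T * U i = 1\<^sub>m r" if "i \<le> D" for i
    using dr that by (simp_all add: U_def coord_isometry_orthonormal)
  have W: "\<forall>k\<in>{1..D}. W k \<in> carrier_mat (d k) (d (k - 1))"
  proof
    fix k assume "k \<in> {1..D}"
    moreover have "U i \<in> carrier_mat (d i) r" for i by (simp add: U_def)
    moreover have "diag_sqrt S \<in> carrier_mat r r" "diag_inv_sqrt S \<in> carrier_mat r r"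
      "L\<^sup>T \<in> carrier_mat r dy" using S L by auto
    ultimately show "W k \<in> carrier_mat (d k) (d (k - 1))"
      using L V d0 dD D2 by (auto simp: W_def intro!: mult_carrier_mat smult_carrier_mat)
  qed
  have "U 1 * diag_inv_sqrt S * L\<^sup>T * V \<in> carrier_mat (d 1) dx"
    using U[of 1] D2 L S V by (auto intro!: mult_carrier_mat)
  then have "W 1 * Sh = c1 \<cdot>\<^sub>m ((U 1 * diag_inv_sqrt S * L\<^sup>T * V) * Sh)"
    using D2 by (simp add: W_def mult_smult_assoc_mat[OF _ Sh])
  then have W1: "W 1 * Sh = c1 \<cdot>\<^sub>m (U 1 * diag_sqrt S * R)"
    using U[of 1] D2 by (simp add: mult_diag_inv_sqrt_svd[OF _ L LL R S S_diag S_pos V Sh svd])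
  have "\<forall>i\<in>{1..D-1}. U i \<in> carrier_mat (d i) r \<and> (U i)\<^sup>T * U i = 1\<^sub>m r" using U by auto
  moreover have "W D = cD \<cdot>\<^sub>m (L * diag_sqrt S * (U (D - 1))\<^sup>T)" by (simp add: W_def)
  moreover have "\<forall>k\<in>{2..D-1}. W k = cm \<cdot>\<^sub>m (U k * (U (k - 1))\<^sup>T)" by (auto simp: W_def)
  ultimately show ?thesis
    using Tobj_balanced_minimizer[where d = d and U = U and W = W, OF D2 V Sig_pd Sh_pd Sh_sq
        L LL R RR S S_diag S_pos svd d0 dD dr _ W] W1
    unfolding cD_def cm_def c1_def by blast
qed

theorem lemma4:
  fixes D dx dy r :: nat and V Sig Sh L S R :: "real mat"
  assumes D1: "D \<ge> 1"
    and V: "V \<in> carrier_mat dy dx"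
    and Sig_pd: "pos_def_mat dx Sig"
    and Sh_pd: "pos_def_mat dx Sh" and Sh_sq: "Sh * Sh = Sig"
    and L: "L \<in> carrier_mat dy r" and LL: "L\<^sup>T * L = 1\<^sub>m r"
    and R: "R \<in> carrier_mat r dx" and RR: "R * R\<^sup>T = 1\<^sub>m r"
    and S: "S \<in> carrier_mat r r" and S_diag: "diagonal_mat S"
    and S_pos: "\<forall>i<r. S $$ (i,i) > 0"
    and svd: "V * Sh = L * S * R"
    and rank: "vec_space.rank dy (V * Sh) = r"
  shows
    "(\<forall>W d. feasible D dx dy r V W d \<longrightarrow>
        Tobj D Sig W d \<ge> real D * rpow (mtrace S) (2 * (real D - 1) / real D)
                             * (real dy * mtrace Sig) powr (1 / real D))
     \<and> (\<forall>d. d 0 = dx \<longrightarrow> d D = dy \<longrightarrow> (\<forall>k\<le>D. r \<le> d k) \<longrightarrow>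
        (\<exists>W. feasible D dx dy r V W d \<and>
           Tobj D Sig W d = real D * rpow (mtrace S) (2 * (real D - 1) / real D)
                             * (real dy * mtrace Sig) powr (1 / real D)))
     \<and> (\<forall>W d U. D \<ge> 2 \<longrightarrow> d 0 = dx \<longrightarrow> d D = dy \<longrightarrow> (\<forall>k\<le>D. r \<le> d k) \<longrightarrow>
        (\<forall>i\<in>{1..D-1}. U i \<in> carrier_mat (d i) r \<and> (U i)\<^sup>T * U i = 1\<^sub>m r) \<longrightarrow>
        (\<forall>k\<in>{1..D}. W k \<in> carrier_mat (d k) (d (k - 1))) \<longrightarrow>
        W D = (mtrace S powr (- (real D - 2) / (2 * real D)) * real dy powr ((real D - 1) / (2 * real D))
                 * mtrace Sig powr (- 1 / (2 * real D))) \<cdot>\<^sub>m (L * diag_sqrt S * (U (D - 1))\<^sup>T) \<longrightarrow>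
        (\<forall>k\<in>{2..D-1}. W k = (mtrace S powr (1 / real D) * (real dy * mtrace Sig) powr (- 1 / (2 * real D)))
                 \<cdot>\<^sub>m (U k * (U (k - 1))\<^sup>T)) \<longrightarrow>
        W 1 * Sh = (mtrace S powr (- (real D - 2) / (2 * real D)) * real dy powr (- 1 / (2 * real D))
                 * mtrace Sig powr ((real D - 1) / (2 * real D))) \<cdot>\<^sub>m (U 1 * diag_sqrt S * R) \<longrightarrow>
        feasible D dx dy r V W d \<and>
        Tobj D Sig W d = real D * rpow (mtrace S) (2 * (real D - 1) / real D)
                             * (real dy * mtrace Sig) powr (1 / real D))"
proof -
  have Sh: "Sh \<in> carrier_mat dx dx" and ShT: "Sh\<^sup>T = Sh" using Sh_pd by (auto simp: pos_def_mat_def)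
  show ?thesis
    using Tobj_lower_bound[OF D1 Sh ShT Sh_sq L LL R RR S S_pos svd]
      Tobj_minimizer_exists[OF D1 V Sig_pd Sh_pd Sh_sq L LL R RR S S_diag S_pos svd]
      Tobj_balanced_minimizer[OF _ V Sig_pd Sh_pd Sh_sq L LL R RR S S_diag S_pos svd]
    by blast
qed

end
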